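(* Let $\rho$ be a probability measure on subgraphs $G$ of $\mathbb Z^2$ invariant under translations (or a joint law of a subgraph $G$ and interactions $w\in\mathbb R^{E(\mathbb Z^2)}$ invariant under the diagonal action of translations), such that almost surely every vertex of $G$ is contained in only finitely many simple cycles of $G$. Then there exists a random subgraph $F$, jointly distributed with $G$ (and $w$), such that the marginal law of $G$ (resp. $(G,w)$) is $\rho$, the joint law of $(G,F)$ (resp. $(G,w,F)$) is translation invariant, and almost surely $F$ is a spanning forest of $G$ whose connected components are exactly the connected components of $G$ (i.e. $F\subseteq G$, $F$ has no cycles, and two vertices are connected in $F$ iff they are connected in $G$).
   Context: $\mathbb Z^2$ is the square lattice graph; translations of $\mathbb Z^2$ act on subgraphs and on edge-indexed interactions. A cycle is a closed path; it is simple if it has no self-intersections. *)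

theory Defs
  imports "HOL-Probability.Probability"
begin

type_synonym vtx = "int \<times> int"

text \<open>Edges of Z^2 are indexed bijectively by (base vertex, direction):
  (x, False) is the horizontal edge {x, x+(1,0)}, (x, True) the vertical edge {x, x+(0,1)}.\<close>
type_synonym edge = "vtx \<times> bool"

definition ends :: "edge \<Rightarrow> vtx set" where
  "ends e = (case e of (x, d) \<Rightarrow>
     {x, if d then (fst x, snd x + 1) else (fst x + 1, snd x)})"

definition shift_v :: "vtx \<Rightarrow> vtx \<Rightarrow> vtx" where
  "shift_v a x = (fst x + fst a, snd x + snd a)"

definition shift_e :: "vtx \<Rightarrow> edge \<Rightarrow> edge" where
  "shift_e a e = (shift_v a (fst e), snd e)"

definition shift_cfg :: "vtx \<Rightarrow> (edge \<Rightarrow> 'b) \<Rightarrow> edge \<Rightarrow> 'b" where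
  "shift_cfg a g = (\<lambda>e. g (shift_e (- fst a, - snd a) e))"

definition Mcfg :: "(edge \<Rightarrow> bool) measure" where
  "Mcfg = Pi\<^sub>M UNIV (\<lambda>_. count_space UNIV)"

definition Mw :: "(edge \<Rightarrow> real) measure" where
  "Mw = Pi\<^sub>M UNIV (\<lambda>_. borel)"

definition gstep :: "(edge \<Rightarrow> bool) \<Rightarrow> vtx \<Rightarrow> vtx \<Rightarrow> bool" where
  "gstep H u v \<longleftrightarrow> (\<exists>e. H e \<and> ends e = {u, v})"

definition connected_in :: "(edge \<Rightarrow> bool) \<Rightarrow> vtx \<Rightarrow> vtx \<Rightarrow> bool" where
  "connected_in H u v \<longleftrightarrow> (gstep H)\<^sup>*\<^sup>* u v"

definition simple_cycle :: "(edge \<Rightarrow> bool) \<Rightarrow> edge set \<Rightarrow> bool" where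
  "simple_cycle H C \<longleftrightarrow> (\<exists>vs. distinct vs \<and> length vs \<ge> 3 \<and>
     (\<forall>i < length vs. \<exists>e. ends e = {vs ! i, vs ! ((i + 1) mod length vs)}) \<and>
     C = {e. \<exists>i < length vs. ends e = {vs ! i, vs ! ((i + 1) mod length vs)}} \<and>
     (\<forall>e \<in> C. H e))"

definition finitely_many_cycles :: "(edge \<Rightarrow> bool) \<Rightarrow> bool" where
  "finitely_many_cycles G \<longleftrightarrow>
     (\<forall>v. finite {C. simple_cycle G C \<and> v \<in> \<Union>(ends ` C)})"

definition spanning_forest :: "(edge \<Rightarrow> bool) \<Rightarrow> (edge \<Rightarrow> bool) \<Rightarrow> bool" where
  "spanning_forest G F \<longleftrightarrow>
     (\<forall>e. F e \<longrightarrow> G e) \<and> \<not> (\<exists>C. simple_cycle F C) \<and>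
     (\<forall>u v. connected_in F u v \<longleftrightarrow> connected_in G u v)"

end

theory Submission
  imports Defs
begin

text \<open>Order the edges of \<open>\<int>\<^sup>2\<close> lexicographically by base vertex and direction; this order is
  invariant under translations. Delete from \<open>G\<close> every edge that is the largest edge of some
  simple cycle of \<open>G\<close>. The result \<open>F\<close> (the free minimal spanning forest of \<open>G\<close> for that order)
  is a measurable, translation-equivariant function of \<open>G\<close>, so the law of \<open>(G, F)\<close>, resp.
  \<open>(G, w, F)\<close>, is an invariant coupling with first marginal \<open>\<rho>\<close>.

  \<open>F\<close> is acyclic, since the largest edge of a cycle of \<open>F\<close> would have been deleted. A deleted edge
  is the largest edge of a cycle, so its endpoints are joined by the other, smaller edges of that
  cycle. This descent terminates: the edges on cycles through a fixed vertex \<open>x\<close> form a finite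
  set, and every edge of a cycle sharing an edge with a cycle through \<open>x\<close> again lies on a cycle
  through \<open>x\<close> (glue the cycles along an ear). A least edge, among those on cycles through \<open>x\<close>,
  whose endpoints are not connected in \<open>F\<close> would therefore contradict itself.\<close>

section \<open>Paths and cycles as vertex lists\<close>

text \<open>A cycle is represented by the list of its vertices; \<open>cycle_pairs\<close> also contains the closing
  pair \<open>{last vs, hd vs}\<close> (\<open>take 1 vs = [hd vs]\<close>). Working with vertex pairs rather than
  edges keeps the gluing arguments purely combinatorial.\<close>

fun path_pairs :: "'a list \<Rightarrow> 'a set set" where
  "path_pairs (x # y # zs) = insert {x, y} (path_pairs (y # zs))"
| "path_pairs _ = {}"

lemma path_pairs_join: "path_pairs (xs @ x # ys) = path_pairs (xs @ [x]) \<union> path_pairs (x # ys)"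
  by (induction xs rule: path_pairs.induct) auto

lemma path_pairs_rev: "path_pairs (rev xs) = path_pairs xs"
proof (induction xs rule: path_pairs.induct)
  case (1 x y zs)
  have "path_pairs (rev (x # y # zs)) = path_pairs (rev (y # zs)) \<union> {{y, x}}"
    using path_pairs_join[of "rev zs" y "[x]"] by simp
  with 1 show ?case by (auto simp: insert_commute)
qed auto

lemma path_pairs_subset: "p \<in> path_pairs xs \<Longrightarrow> p \<subseteq> set xs"
  by (induction xs rule: path_pairs.induct) auto

lemma finite_path_pairs: "finite (path_pairs xs)"
  by (induction xs rule: path_pairs.induct) auto

lemma path_pairs_map: "path_pairs (map f xs) = image f ` path_pairs xs"
  by (induction xs rule: path_pairs.induct) auto

lemma path_pairs_conv_nth: "path_pairs xs = (\<lambda>i. {xs ! i, xs ! Suc i}) ` {..<length xs - 1}"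
proof (induction xs rule: path_pairs.induct)
  case (1 x y zs)
  have "{..<length (x # y # zs) - 1} = insert 0 (Suc ` {..<length (y # zs) - 1})"
    using lessThan_Suc_eq_insert_0[of "length zs"] by simp
  then show ?case
    using 1 by (simp only: image_insert image_image) simp
qed auto

definition cycle_pairs :: "'a list \<Rightarrow> 'a set set" where
  "cycle_pairs vs = path_pairs (vs @ take 1 vs)"

lemma cycle_pairs_Cons: "cycle_pairs (x # xs) = path_pairs (x # xs @ [x])"
  by (simp add: cycle_pairs_def)

lemma cycle_pairs_rotate1: "cycle_pairs (rotate1 vs) = cycle_pairs vs"
proof (cases vs)
  case (Cons x xs)
  show ?thesis
  proof (cases xs)
    case (Cons y ys)
    have "cycle_pairs (rotate1 vs) = path_pairs (y # ys @ [x, y])"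
      using \<open>vs = x # xs\<close> Cons by (simp add: cycle_pairs_Cons)
    also have "\<dots> = path_pairs (y # ys @ [x]) \<union> path_pairs [x, y]"
      using path_pairs_join[of "y # ys" x "[y]"] by simp
    also have "\<dots> = path_pairs (x # y # ys @ [x])"
      using path_pairs_join[of "[x]" y "ys @ [x]"] by auto
    finally show ?thesis using \<open>vs = x # xs\<close> Cons by (simp add: cycle_pairs_Cons)
  qed (simp add: \<open>vs = x # xs\<close>)
qed simp

lemma cycle_pairs_rotate: "cycle_pairs (rotate n vs) = cycle_pairs vs"
  by (induction n) (simp_all add: cycle_pairs_rotate1)

lemma cycle_pairs_conv_nth:
  "cycle_pairs vs = (\<lambda>i. {vs ! i, vs ! ((i + 1) mod length vs)}) ` {..<length vs}"
proof (cases "vs = []")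
  case False
  define ys where "ys = vs @ take 1 vs"
  have len: "length ys - 1 = length vs"
    using False by (simp add: ys_def)
  have "ys ! i = vs ! i" if "i < length vs" for i
    using that by (simp add: ys_def nth_append)
  moreover have "ys ! Suc i = vs ! ((i + 1) mod length vs)" if "i < length vs" for i
  proof (cases "Suc i = length vs")
    case True
    then show ?thesis using False by (simp add: ys_def nth_append hd_conv_nth take_Suc)
  qed (use that in \<open>simp add: ys_def nth_append\<close>)
  ultimately show ?thesis
    unfolding cycle_pairs_def ys_def[symmetric] path_pairs_conv_nth len
    by (intro image_cong) simp_all
qed (simp add: cycle_pairs_def)

lemma cycle_pairs_eq_insert:
  assumes "vs \<noteq> []" shows "cycle_pairs vs = insert {last vs, hd vs} (path_pairs vs)"
proof -
  have "vs @ take 1 vs = butlast vs @ last vs # [hd vs]"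
    using assms by (cases vs) auto
  then show ?thesis
    using path_pairs_join[of "butlast vs" "last vs" "[hd vs]"] assms
    by (auto simp: cycle_pairs_def)
qed

lemma cycle_pairs_subset: "p \<in> cycle_pairs vs \<Longrightarrow> p \<subseteq> set vs"
  using path_pairs_subset[of p "vs @ take 1 vs"] set_take_subset[of 1 vs]
  by (auto simp: cycle_pairs_def)

lemma last_rotate_Suc:
  assumes "vs \<noteq> []" shows "last (rotate (Suc i) vs) = vs ! (i mod length vs)"
proof -
  obtain a list where a: "rotate i vs = a # list"
    using assms by (cases "rotate i vs") auto
  then have "a = vs ! (i mod length vs)"
    using hd_rotate_conv_nth[OF assms, of i] by simp
  with a show ?thesis by simp
qed

lemma closing_pair_notin_path_pairs:
  assumes "distinct vs" "3 \<le> length vs"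
  shows "{last vs, hd vs} \<notin> path_pairs vs"
proof
  assume "{last vs, hd vs} \<in> path_pairs vs"
  then obtain i where i: "i < length vs - 1" "{last vs, hd vs} = {vs ! i, vs ! Suc i}"
    by (auto simp: path_pairs_conv_nth)
  have ends: "last vs = vs ! (length vs - 1)" "hd vs = vs ! 0"
    using assms(2) by (simp_all add: last_conv_nth hd_conv_nth flip: length_greater_0_conv)
  have "i < length vs" "Suc i < length vs" "length vs - 1 < length vs" "0 < length vs"
    using i(1) by auto
  then have "length vs - 1 \<in> {i, Suc i}" "0 \<in> {i, Suc i}"
    using i(2) assms(1) by (auto simp: ends doubleton_eq_iff nth_eq_iff_index_eq)
  then show False using i(1) assms(2) by auto
qed

lemma cycle_pairs_map: "cycle_pairs (map f vs) = image f ` cycle_pairs vs"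
proof -
  have "map f vs @ take 1 (map f vs) = map f (vs @ take 1 vs)"
    by (simp add: take_map)
  then show ?thesis
    by (simp only: cycle_pairs_def path_pairs_map)
qed

lemma inj_ends: "inj ends"
proof (rule injI)
  fix e1 e2 :: edge
  assume "ends e1 = ends e2"
  then show "e1 = e2"
    by (cases e1; cases e2; cases "snd e1"; cases "snd e2") (auto simp: ends_def doubleton_eq_iff)
qed

definition is_cycle :: "(edge \<Rightarrow> bool) \<Rightarrow> vtx list \<Rightarrow> bool" where
  "is_cycle H vs \<longleftrightarrow> distinct vs \<and> 3 \<le> length vs \<and> cycle_pairs vs \<subseteq> ends ` Collect H"

definition cycle_edges :: "vtx list \<Rightarrow> edge set" where
  "cycle_edges vs = ends -` cycle_pairs vs"

lemma finite_cycle_edges: "finite (cycle_edges vs)"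
  unfolding cycle_edges_def cycle_pairs_def
  by (rule finite_vimageI[OF finite_path_pairs inj_ends])

lemma is_cycle_iff_edges:
  "is_cycle H vs \<longleftrightarrow> distinct vs \<and> 3 \<le> length vs \<and> cycle_pairs vs \<subseteq> range ends \<and>
     cycle_edges vs \<subseteq> Collect H"
  unfolding is_cycle_def cycle_edges_def using inj_ends by (auto simp: inj_eq) blast

lemma cycle_edges_subset: "is_cycle H vs \<Longrightarrow> e \<in> cycle_edges vs \<Longrightarrow> H e"
  unfolding is_cycle_iff_edges by blast

lemma ends_cycle_edges: "is_cycle H vs \<Longrightarrow> ends ` cycle_edges vs = cycle_pairs vs"
  unfolding is_cycle_def cycle_edges_def by blast

lemma simple_cycle_iff: "simple_cycle H C \<longleftrightarrow> (\<exists>vs. is_cycle H vs \<and> C = cycle_edges vs)"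
proof -
  have edges: "{e. \<exists>i < length vs. ends e = {vs ! i, vs ! ((i + 1) mod length vs)}} = cycle_edges vs"
    and pairs: "(\<forall>i < length vs. \<exists>e. ends e = {vs ! i, vs ! ((i + 1) mod length vs)})
      \<longleftrightarrow> cycle_pairs vs \<subseteq> range ends" for vs :: "vtx list"
    unfolding cycle_edges_def cycle_pairs_conv_nth by blast+
  show ?thesis
    unfolding simple_cycle_def edges pairs is_cycle_iff_edges by blast
qed

lemma vertices_cycle_edges: "is_cycle H vs \<Longrightarrow> \<Union> (ends ` cycle_edges vs) = set vs"
proof
  assume cyc: "is_cycle H vs"
  show "\<Union> (ends ` cycle_edges vs) \<subseteq> set vs"
    using cycle_pairs_subset by (auto simp: cycle_edges_def)
  show "set vs \<subseteq> \<Union> (ends ` cycle_edges vs)"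
  proof
    fix v assume "v \<in> set vs"
    then obtain i where "i < length vs" "v = vs ! i"
      by (auto simp: in_set_conv_nth)
    then have "v \<in> \<Union> (cycle_pairs vs)"
      by (auto simp: cycle_pairs_conv_nth)
    then show "v \<in> \<Union> (ends ` cycle_edges vs)"
      by (simp add: ends_cycle_edges[OF cyc])
  qed
qed

lemma is_cycle_rotate: "is_cycle H (rotate n vs) \<longleftrightarrow> is_cycle H vs"
  by (simp add: is_cycle_def cycle_pairs_rotate)

lemma cycle_edges_rotate: "cycle_edges (rotate n vs) = cycle_edges vs"
  by (simp add: cycle_edges_def cycle_pairs_rotate)

lemma cycle_rotate_to_closing_pair:
  assumes "p \<in> cycle_pairs vs"
  obtains n where "p = {last (rotate n vs), hd (rotate n vs)}"
proof -
  have ne: "vs \<noteq> []" using assms by (auto simp: cycle_pairs_def)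
  obtain i where i: "i < length vs" "p = {vs ! i, vs ! ((i + 1) mod length vs)}"
    using assms by (auto simp: cycle_pairs_conv_nth)
  then have "p = {last (rotate (Suc i) vs), hd (rotate (Suc i) vs)}"
    using ne by (simp add: last_rotate_Suc hd_rotate_conv_nth del: rotate_Suc)
  then show ?thesis by (rule that)
qed

lemma gstep_sym: "gstep H u v \<Longrightarrow> gstep H v u"
  unfolding gstep_def by (simp add: insert_commute)

lemma connected_in_sym: "connected_in H u v \<Longrightarrow> connected_in H v u"
  unfolding connected_in_def
  by (induction rule: rtranclp_induct) (auto intro: converse_rtranclp_into_rtranclp gstep_sym)

lemma connected_in_lift:
  assumes "\<And>u v. gstep H u v \<Longrightarrow> connected_in H' u v" and "connected_in H u v"
  shows "connected_in H' u v"
  using assms(2) unfolding connected_in_def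
  by (induction rule: rtranclp_induct) (auto intro: rtranclp_trans assms(1)[unfolded connected_in_def])

lemma connected_in_mono:
  assumes "\<And>e. H e \<Longrightarrow> H' e" and "connected_in H u v"
  shows "connected_in H' u v"
proof (rule connected_in_lift[OF _ assms(2)])
  fix a b assume "gstep H a b"
  then have "gstep H' a b" using assms(1) unfolding gstep_def by blast
  then show "connected_in H' a b" by (simp add: connected_in_def)
qed

lemma connected_in_path:
  "path_pairs xs \<subseteq> ends ` Collect H \<Longrightarrow> xs \<noteq> [] \<Longrightarrow> connected_in H (hd xs) (last xs)"
proof (induction xs rule: path_pairs.induct)
  case (1 x y zs)
  then have "gstep H x y" unfolding gstep_def by auto blast
  with 1 show ?case by (auto simp: connected_in_def intro: converse_rtranclp_into_rtranclp)
qed (auto simp: connected_in_def)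

lemma connected_in_cycle_minus_edge:
  assumes cyc: "is_cycle H vs" and e: "e \<in> cycle_edges vs" and xy: "ends e = {x, y}"
  shows "connected_in (\<lambda>e'. e' \<in> cycle_edges vs \<and> e' \<noteq> e) x y"
proof -
  obtain n where closing: "ends e = {last (rotate n vs), hd (rotate n vs)}"
    using cycle_rotate_to_closing_pair e by (auto simp: cycle_edges_def)
  define ws where "ws = rotate n vs"
  have ws: "is_cycle H ws" "cycle_edges ws = cycle_edges vs"
    using cyc by (simp_all add: ws_def is_cycle_rotate cycle_edges_rotate)
  then have ne: "ws \<noteq> []" by (auto simp: is_cycle_def)
  have "ends e \<notin> path_pairs ws"
    using closing closing_pair_notin_path_pairs[of ws] ws(1) by (simp add: ws_def is_cycle_def)
  moreover have "path_pairs ws \<subseteq> ends ` cycle_edges vs"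
    using ends_cycle_edges[OF ws(1)] cycle_pairs_eq_insert[OF ne] ws(2) by auto
  ultimately have "path_pairs ws \<subseteq> ends ` {e'. e' \<in> cycle_edges vs \<and> e' \<noteq> e}"
    by blast
  from connected_in_path[OF this ne] show ?thesis
    using closing xy connected_in_sym by (fastforce simp: ws_def doubleton_eq_iff)
qed

section \<open>Gluing cycles\<close>

lemma cycle_pairs_two_arcs:
  "cycle_pairs (p # a @ q # rev b) = path_pairs (p # a @ [q]) \<union> path_pairs (p # b @ [q])"
proof -
  have "cycle_pairs (p # a @ q # rev b) = path_pairs ((p # a) @ q # rev b @ [p])"
    by (simp add: cycle_pairs_Cons)
  also have "\<dots> = path_pairs (p # a @ [q]) \<union> path_pairs (rev (p # b @ [q]))"
    by (subst path_pairs_join) simp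
  finally show ?thesis by (simp only: path_pairs_rev)
qed

lemma cycle_of_two_arcs:
  assumes "distinct (p # a @ q # b)" "a @ b \<noteq> []"
    and "path_pairs (p # a @ [q]) \<subseteq> ends ` Collect H" "path_pairs (p # b @ [q]) \<subseteq> ends ` Collect H"
  shows "is_cycle H (p # a @ q # rev b)"
  unfolding is_cycle_def cycle_pairs_two_arcs
  using assms by (auto simp flip: length_greater_0_conv)

text \<open>An ear \<open>p \<dots> q\<close> of the cycle \<open>ds\<close> splits \<open>ds\<close> into two arcs from \<open>p\<close> to \<open>q\<close>; the ear
  together with an arc containing \<open>u\<close> is again a cycle.\<close>

lemma cycle_through_ear:
  assumes cyc: "is_cycle G ds" and u: "u \<in> set ds"
    and ear: "distinct (p # mid @ [q])" "p \<in> set ds" "q \<in> set ds" "set mid \<inter> set ds = {}"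
      "path_pairs (p # mid @ [q]) \<subseteq> ends ` Collect G"
  obtains vs where "is_cycle G vs" "u \<in> set vs" "path_pairs (p # mid @ [q]) \<subseteq> cycle_pairs vs"
proof -
  obtain as bs where ds: "ds = as @ p # bs"
    using split_list[OF ear(2)] by blast
  have "q \<in> set (bs @ as)"
    using ear(1,3) ds by auto
  then obtain r1 r2 where r: "bs @ as = r1 @ q # r2"
    using split_list by metis
  have rot: "rotate (length as) ds = p # r1 @ q # rev (rev r2)"
    by (simp add: ds rotate_append r)
  have "cycle_pairs ds = cycle_pairs (p # r1 @ q # rev (rev r2))"
    by (metis rot cycle_pairs_rotate)
  also have "\<dots> = path_pairs (p # r1 @ [q]) \<union> path_pairs (p # rev r2 @ [q])"
    by (rule cycle_pairs_two_arcs)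
  finally have arcs: "cycle_pairs ds = path_pairs (p # r1 @ [q]) \<union> path_pairs (p # rev r2 @ [q])" .
  have arcs_in_G: "path_pairs (p # r1 @ [q]) \<subseteq> ends ` Collect G"
      "path_pairs (p # rev r2 @ [q]) \<subseteq> ends ` Collect G"
    using cyc arcs by (auto simp: is_cycle_def)
  have dist: "distinct (p # r1 @ q # r2)"
    using cyc rot by (metis distinct_rotate is_cycle_def rev_rev_ident)
  have set_ds: "set ds = set (p # r1 @ q # r2)"
    using rot by (metis set_rotate rev_rev_ident)
  have dist_ear: "distinct (p # r1 @ q # mid)" "distinct (p # rev r2 @ q # mid)"
    using dist ear(1,4) set_ds by auto
  show ?thesis
  proof (cases "u \<in> set r1")
    case True
    then have "r1 @ mid \<noteq> []" by auto
    then have "is_cycle G (p # r1 @ q # rev mid)"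
      by (rule cycle_of_two_arcs[OF dist_ear(1) _ arcs_in_G(1) ear(5)])
    with True show ?thesis
      by (intro that[of "p # r1 @ q # rev mid"]) (auto simp: cycle_pairs_two_arcs)
  next
    case False
    show ?thesis
    proof (cases "rev r2 @ mid = []")
      case True
      then show ?thesis
        using cyc u arcs by (intro that[of ds]) auto
    next
      case nonempty: False
      then have "is_cycle G (p # rev r2 @ q # rev mid)"
        by (rule cycle_of_two_arcs[OF dist_ear(2) _ arcs_in_G(2) ear(5)])
      moreover have "u \<in> set (p # rev r2 @ q # rev mid)"
        using u False set_ds by auto
      ultimately show ?thesis
        by (intro that) (auto simp: cycle_pairs_two_arcs)
    qed
  qed
qed

text \<open>Splitting a path between two vertices of \<open>ds\<close> at its interior vertices on \<open>ds\<close> reduces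
  it to ears.\<close>

lemma cycle_through_path:
  assumes cyc: "is_cycle G ds" and u: "u \<in> set ds"
  shows "\<lbrakk>distinct P; 2 \<le> length P; hd P \<in> set ds; last P \<in> set ds;
    path_pairs P \<subseteq> ends ` Collect G; pr \<in> path_pairs P\<rbrakk>
    \<Longrightarrow> \<exists>vs. is_cycle G vs \<and> u \<in> set vs \<and> pr \<in> cycle_pairs vs"
proof (induction "length P" arbitrary: P rule: less_induct)
  case less
  obtain p mid q where P: "P = p # mid @ [q]"
    using less.prems(2) by (metis One_nat_def Suc_1 Suc_le_length_iff le_SucE neq_Nil_conv rev_exhaust)
  show ?case
  proof (cases "set mid \<inter> set ds = {}")
    case True
    have "distinct (p # mid @ [q])" "p \<in> set ds" "q \<in> set ds"
      "path_pairs (p # mid @ [q]) \<subseteq> ends ` Collect G"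
      using less.prems P by auto
    then obtain vs where "is_cycle G vs" "u \<in> set vs" "path_pairs P \<subseteq> cycle_pairs vs"
      using cycle_through_ear[OF cyc u _ _ _ True] P by blast
    then show ?thesis
      using less.prems(6) by blast
  next
    case False
    then obtain w m1 m2 where w: "w \<in> set ds" "mid = m1 @ w # m2"
      by (metis disjoint_iff split_list)
    have split: "path_pairs P = path_pairs (p # m1 @ [w]) \<union> path_pairs (w # m2 @ [q])"
      using path_pairs_join[of "p # m1" w "m2 @ [q]"] by (simp add: P w(2))
    then consider "pr \<in> path_pairs (p # m1 @ [w])" | "pr \<in> path_pairs (w # m2 @ [q])"
      using less.prems(6) by blast
    then show ?thesis
    proof cases
      case 1
      then show ?thesis
        using less.hyps[of "p # m1 @ [w]"] less.prems w P split by auto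
    next
      case 2
      then show ?thesis
        using less.hyps[of "w # m2 @ [q]"] less.prems w P split by auto
    qed
  qed
qed

lemma cycle_through_shared_edge:
  assumes ds: "is_cycle G ds" "u \<in> set ds" "e \<in> cycle_edges ds"
    and cs: "is_cycle G cs" "e \<in> cycle_edges cs" "e' \<in> cycle_edges cs"
  shows "\<exists>vs. is_cycle G vs \<and> u \<in> set vs \<and> e' \<in> cycle_edges vs"
proof (cases "e' = e")
  case False
  obtain n where closing: "ends e = {last (rotate n cs), hd (rotate n cs)}"
    using cycle_rotate_to_closing_pair cs(2) by (auto simp: cycle_edges_def)
  define ws where "ws = rotate n cs"
  have ws: "is_cycle G ws" "cycle_edges ws = cycle_edges cs"
    using cs(1) by (simp_all add: ws_def is_cycle_rotate cycle_edges_rotate)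
  then have ne: "ws \<noteq> []" by (auto simp: is_cycle_def)
  have "ends e' \<in> cycle_pairs ws" "ends e' \<noteq> ends e"
    using cs(3) ws(2) False inj_ends by (auto simp: cycle_edges_def inj_eq)
  then have "ends e' \<in> path_pairs ws"
    using closing cycle_pairs_eq_insert[OF ne] by (auto simp: ws_def)
  moreover have "path_pairs ws \<subseteq> ends ` Collect G"
    using ws(1) cycle_pairs_eq_insert[OF ne] by (auto simp: is_cycle_def)
  moreover have "hd ws \<in> set ds" "last ws \<in> set ds"
    using closing ds(3) cycle_pairs_subset by (auto simp: ws_def cycle_edges_def)
  moreover have "distinct ws" "2 \<le> length ws"
    using ws(1) by (auto simp: is_cycle_def)
  ultimately show ?thesis
    using cycle_through_path[OF ds(1,2)] by (auto simp: cycle_edges_def)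
qed (use ds in blast)

section \<open>The free minimal spanning forest\<close>

definition edge_less :: "edge \<Rightarrow> edge \<Rightarrow> bool" where
  "edge_less e1 e2 \<longleftrightarrow> fst (fst e1) < fst (fst e2) \<or>
     (fst (fst e1) = fst (fst e2) \<and> (snd (fst e1) < snd (fst e2) \<or>
       (snd (fst e1) = snd (fst e2) \<and> \<not> snd e1 \<and> snd e2)))"

interpretation edge_order: linorder "\<lambda>e1 e2. edge_less e1 e2 \<or> e1 = e2" edge_less
  by unfold_locales (auto simp: edge_less_def prod_eq_iff)

definition cycle_maximal :: "(edge \<Rightarrow> bool) \<Rightarrow> edge \<Rightarrow> bool" where
  "cycle_maximal G e \<longleftrightarrow>
     (\<exists>vs. is_cycle G vs \<and> e \<in> cycle_edges vs \<and> (\<forall>e' \<in> cycle_edges vs - {e}. edge_less e' e))"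

definition free_msf :: "(edge \<Rightarrow> bool) \<Rightarrow> edge \<Rightarrow> bool" where
  "free_msf G e \<longleftrightarrow> G e \<and> \<not> cycle_maximal G e"

lemma is_cycle_mono: "is_cycle H vs \<Longrightarrow> (\<And>e. H e \<Longrightarrow> H' e) \<Longrightarrow> is_cycle H' vs"
  unfolding is_cycle_def by blast

lemma cycle_edges_nonempty:
  assumes "is_cycle H vs" shows "cycle_edges vs \<noteq> {}"
proof -
  have "vs \<noteq> []" using assms by (auto simp: is_cycle_def)
  then have "cycle_pairs vs \<noteq> {}" by (simp add: cycle_pairs_eq_insert)
  then show ?thesis using ends_cycle_edges[OF assms] by auto
qed

lemma free_msf_acyclic: "\<not> simple_cycle (free_msf G) C"
proof
  assume "simple_cycle (free_msf G) C"
  then obtain vs where cyc: "is_cycle (free_msf G) vs"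
    by (auto simp: simple_cycle_iff)
  obtain m where m: "m \<in> cycle_edges vs" "\<forall>e \<in> cycle_edges vs. edge_less m e \<or> m = e \<longrightarrow> e = m"
    using edge_order.finite_has_maximal[OF finite_cycle_edges cycle_edges_nonempty[OF cyc]] by blast
  have "is_cycle G vs"
    using cyc by (rule is_cycle_mono) (simp add: free_msf_def)
  with m have "cycle_maximal G m"
    unfolding cycle_maximal_def using edge_order.neq_iff by blast
  with cycle_edges_subset[OF cyc m(1)] show False
    by (simp add: free_msf_def)
qed

lemma finite_edges_on_cycles_through:
  assumes "finitely_many_cycles G"
  shows "finite {e. \<exists>vs. is_cycle G vs \<and> u \<in> set vs \<and> e \<in> cycle_edges vs}"
proof -
  let ?Cs = "{cycle_edges vs |vs. is_cycle G vs \<and> u \<in> set vs}"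
  have "?Cs \<subseteq> {C. simple_cycle G C \<and> u \<in> \<Union> (ends ` C)}"
    unfolding simple_cycle_iff using vertices_cycle_edges by blast
  moreover have "finite {C. simple_cycle G C \<and> u \<in> \<Union> (ends ` C)}"
    using assms unfolding finitely_many_cycles_def by blast
  ultimately have "finite ?Cs"
    by (rule finite_subset)
  moreover have "{e. \<exists>vs. is_cycle G vs \<and> u \<in> set vs \<and> e \<in> cycle_edges vs} = \<Union> ?Cs"
    by blast
  ultimately show ?thesis
    using finite_cycle_edges by auto
qed

lemma free_msf_connects_cycle_edges:
  assumes fin: "finitely_many_cycles G" and cyc: "is_cycle G ds"
    and e: "e \<in> cycle_edges ds" and xy: "ends e = {x, y}"
  shows "connected_in (free_msf G) x y"
proof (rule ccontr)
  \<comment> \<open>\<open>E\<close> is finite and contains all edges of any cycle sharing an edge with it, so a least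
    bad edge of \<open>E\<close> is connected through the smaller edges of its cycle.\<close>
  define E where "E = {e. \<exists>vs. is_cycle G vs \<and> x \<in> set vs \<and> e \<in> cycle_edges vs}"
  define W where "W = {e \<in> E. \<exists>a b. ends e = {a, b} \<and> \<not> connected_in (free_msf G) a b}"
  have "x \<in> set ds"
    using e xy cycle_pairs_subset by (auto simp: cycle_edges_def)
  moreover assume "\<not> connected_in (free_msf G) x y"
  ultimately have "e \<in> W"
    unfolding W_def E_def using cyc e xy by blast
  moreover have "finite W"
    using finite_edges_on_cycles_through[OF fin] by (simp add: W_def E_def)
  ultimately obtain m where "m \<in> W" and m_min: "\<And>e'. e' \<in> W \<Longrightarrow> \<not> edge_less e' m"
    using edge_order.finite_has_minimal[of W] edge_order.less_asym by blast
  then obtain a b where m: "m \<in> E" "ends m = {a, b}" "\<not> connected_in (free_msf G) a b"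
    by (auto simp: W_def)
  then obtain ds' where ds': "is_cycle G ds'" "x \<in> set ds'" "m \<in> cycle_edges ds'"
    by (auto simp: E_def)
  show False
  proof (cases "free_msf G m")
    case True
    then have "gstep (free_msf G) a b"
      using m(2) unfolding gstep_def by blast
    with m(3) show False
      by (simp add: connected_in_def r_into_rtranclp)
  next
    case False
    then obtain vs where vs: "is_cycle G vs" "m \<in> cycle_edges vs"
      "\<forall>e' \<in> cycle_edges vs - {m}. edge_less e' m"
      using cycle_edges_subset[OF ds'(1,3)] by (auto simp: free_msf_def cycle_maximal_def)
    have "connected_in (free_msf G) a b"
    proof (rule connected_in_lift[OF _ connected_in_cycle_minus_edge[OF vs(1,2) m(2)]])
      fix a' b' assume "gstep (\<lambda>e'. e' \<in> cycle_edges vs \<and> e' \<noteq> m) a' b'"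
      then obtain e' where e': "e' \<in> cycle_edges vs" "e' \<noteq> m" "ends e' = {a', b'}"
        unfolding gstep_def by blast
      have "e' \<in> E"
        using cycle_through_shared_edge[OF ds' vs(1,2) e'(1)] by (auto simp: E_def)
      moreover have "edge_less e' m"
        using vs(3) e'(1,2) by blast
      ultimately have "e' \<in> E - W"
        using m_min by blast
      with e'(3) show "connected_in (free_msf G) a' b'"
        unfolding W_def by blast
    qed
    with m(3) show False ..
  qed
qed

lemma spanning_forest_free_msf:
  assumes "finitely_many_cycles G"
  shows "spanning_forest G (free_msf G)"
  unfolding spanning_forest_def
proof (intro conjI allI impI iffI)
  show "free_msf G e \<Longrightarrow> G e" for e
    by (simp add: free_msf_def)
  show "\<not> (\<exists>C. simple_cycle (free_msf G) C)"
    using free_msf_acyclic by blast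
  show "connected_in G u v" if "connected_in (free_msf G) u v" for u v
    by (rule connected_in_mono[OF _ that]) (simp add: free_msf_def)
  show "connected_in (free_msf G) u v" if "connected_in G u v" for u v
    using that
  proof (rule connected_in_lift[rotated])
    fix a b assume "gstep G a b"
    then obtain e where e: "G e" "ends e = {a, b}"
      unfolding gstep_def by blast
    show "connected_in (free_msf G) a b"
    proof (cases "free_msf G e")
      case True
      with e(2) have "gstep (free_msf G) a b"
        unfolding gstep_def by blast
      then show ?thesis
        by (simp add: connected_in_def)
    next
      case False
      then obtain vs where "is_cycle G vs" "e \<in> cycle_edges vs"
        using e(1) by (auto simp: free_msf_def cycle_maximal_def)
      then show ?thesis
        using free_msf_connects_cycle_edges[OF assms] e(2) by blast
    qed
  qed
qed

section \<open>Translation equivariance\<close>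

lemma shift_v_eq_plus: "shift_v a x = x + a"
  by (simp add: shift_v_def plus_prod_def)

lemma shift_cfg_apply: "shift_cfg a G e = G (shift_e (- a) e)"
  by (simp add: shift_cfg_def uminus_prod_def)

lemma shift_e_shift_e: "shift_e a (shift_e b e) = shift_e (a + b) e"
  by (simp add: shift_e_def shift_v_eq_plus algebra_simps)

lemma shift_e_zero: "shift_e 0 e = e"
  by (simp add: shift_e_def shift_v_eq_plus)

lemma image_shift_e: "shift_e a ` E = shift_e (- a) -` E"
  by (auto simp: shift_e_shift_e shift_e_zero intro!: image_eqI[of _ _ "shift_e (- a) e" for e])

lemma ends_shift_e: "ends (shift_e a e) = shift_v a ` ends e"
  by (cases e) (auto simp: ends_def shift_e_def shift_v_def)

lemma edge_less_shift_e: "edge_less (shift_e a e1) (shift_e a e2) \<longleftrightarrow> edge_less e1 e2"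
  by (auto simp: edge_less_def shift_e_def shift_v_def)

lemma mem_image_shift_v_iff: "X \<in> image (shift_v a) ` P \<longleftrightarrow> shift_v (- a) ` X \<in> P"
proof
  assume "X \<in> image (shift_v a) ` P"
  then show "shift_v (- a) ` X \<in> P"
    by (auto simp: image_image shift_v_eq_plus)
next
  assume "shift_v (- a) ` X \<in> P"
  moreover have "X = shift_v a ` shift_v (- a) ` X"
    by (simp add: image_image shift_v_eq_plus)
  ultimately show "X \<in> image (shift_v a) ` P"
    by blast
qed

lemma cycle_edges_map_shift_v: "cycle_edges (map (shift_v a) vs) = shift_e a ` cycle_edges vs"
  by (simp add: set_eq_iff cycle_edges_def cycle_pairs_map mem_image_shift_v_iff ends_shift_e
      image_shift_e)

lemma is_cycle_shift:
  assumes "is_cycle G vs" shows "is_cycle (shift_cfg a G) (map (shift_v a) vs)"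
proof -
  have "inj_on (shift_v a) (set vs)"
    by (rule inj_onI) (simp add: shift_v_eq_plus)
  moreover have "shift_e a ` cycle_edges vs \<subseteq> Collect (shift_cfg a G)"
    using cycle_edges_subset[OF assms] by (auto simp: shift_cfg_apply shift_e_shift_e shift_e_zero)
  moreover have "cycle_pairs (map (shift_v a) vs) \<subseteq> range ends"
    using assms by (auto simp: is_cycle_iff_edges cycle_pairs_map ends_shift_e
        simp flip: ends_shift_e)
  ultimately show ?thesis
    using assms by (simp add: is_cycle_iff_edges distinct_map cycle_edges_map_shift_v)
qed

lemma cycle_maximal_shift:
  assumes "cycle_maximal G e" shows "cycle_maximal (shift_cfg a G) (shift_e a e)"
proof -
  obtain vs where vs: "is_cycle G vs" "e \<in> cycle_edges vs"
    "\<forall>e' \<in> cycle_edges vs - {e}. edge_less e' e"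
    using assms by (auto simp: cycle_maximal_def)
  have "\<forall>e' \<in> shift_e a ` cycle_edges vs - {shift_e a e}. edge_less e' (shift_e a e)"
    using vs(3) by (auto simp: edge_less_shift_e)
  then show ?thesis
    unfolding cycle_maximal_def using is_cycle_shift[OF vs(1)] vs(2)
    by (metis cycle_edges_map_shift_v imageI)
qed

lemma shift_cfg_shift_cfg: "shift_cfg a (shift_cfg b G) = shift_cfg (a + b) G"
  by (simp add: fun_eq_iff shift_cfg_apply shift_e_shift_e add.commute)

lemma shift_cfg_zero: "shift_cfg 0 G = G"
  by (simp add: fun_eq_iff shift_cfg_apply shift_e_zero)

lemma free_msf_shift: "free_msf (shift_cfg a G) = shift_cfg a (free_msf G)"
proof -
  have "cycle_maximal (shift_cfg a G) e \<longleftrightarrow> cycle_maximal G (shift_e (- a) e)" for e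
    using cycle_maximal_shift[of G "shift_e (- a) e" a] cycle_maximal_shift[of "shift_cfg a G" e "- a"]
    by (auto simp: shift_e_shift_e shift_e_zero shift_cfg_shift_cfg shift_cfg_zero)
  then show ?thesis
    by (simp add: fun_eq_iff free_msf_def shift_cfg_apply)
qed

section \<open>Invariant couplings\<close>

lemma measurable_graph:
  assumes "sets \<rho> = sets M" "f \<in> M \<rightarrow>\<^sub>M N"
  shows "(\<lambda>x. (x, f x)) \<in> \<rho> \<rightarrow>\<^sub>M M \<Otimes>\<^sub>M N"
  unfolding measurable_cong_sets[OF assms(1) refl]
  by (intro measurable_Pair measurable_ident_sets refl assms(2))

lemma distr_graph_fst:
  assumes "sets \<rho> = sets M" "f \<in> M \<rightarrow>\<^sub>M N"
  shows "distr (distr \<rho> (M \<Otimes>\<^sub>M N) (\<lambda>x. (x, f x))) M fst = \<rho>"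
proof -
  have "distr (distr \<rho> (M \<Otimes>\<^sub>M N) (\<lambda>x. (x, f x))) M fst = distr \<rho> M (\<lambda>x. x)"
    using distr_distr[OF measurable_fst measurable_graph[OF assms]] by (simp add: comp_def)
  also have "\<dots> = \<rho>"
    using assms(1) by (simp add: distr_id2)
  finally show ?thesis .
qed

lemma distr_graph_invariant:
  assumes sets: "sets \<rho> = sets M" and f: "f \<in> M \<rightarrow>\<^sub>M N"
    and T: "T \<in> M \<rightarrow>\<^sub>M M" and S: "S \<in> N \<rightarrow>\<^sub>M N"
    and inv: "distr \<rho> M T = \<rho>" and equivariant: "\<And>x. f (T x) = S (f x)"
  shows "distr (distr \<rho> (M \<Otimes>\<^sub>M N) (\<lambda>x. (x, f x))) (M \<Otimes>\<^sub>M N) (\<lambda>(x, y). (T x, S y))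
       = distr \<rho> (M \<Otimes>\<^sub>M N) (\<lambda>x. (x, f x))"
proof -
  have TS: "(\<lambda>(x, y). (T x, S y)) \<in> M \<Otimes>\<^sub>M N \<rightarrow>\<^sub>M M \<Otimes>\<^sub>M N"
    unfolding split_beta'
    by (intro measurable_Pair measurable_compose[OF measurable_fst T] measurable_compose[OF measurable_snd S])
  have T\<rho>: "T \<in> \<rho> \<rightarrow>\<^sub>M M"
    unfolding measurable_cong_sets[OF sets refl] by (rule T)
  have "distr (distr \<rho> (M \<Otimes>\<^sub>M N) (\<lambda>x. (x, f x))) (M \<Otimes>\<^sub>M N) (\<lambda>(x, y). (T x, S y))
      = distr \<rho> (M \<Otimes>\<^sub>M N) ((\<lambda>x. (x, f x)) \<circ> T)"
    using distr_distr[OF TS measurable_graph[OF sets f]] by (simp add: comp_def equivariant)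
  also have "\<dots> = distr (distr \<rho> M T) (M \<Otimes>\<^sub>M N) (\<lambda>x. (x, f x))"
    using distr_distr[OF measurable_graph[OF refl f] T\<rho>] by simp
  finally show ?thesis
    by (simp only: inv)
qed

text \<open>Only the graph of \<open>f\<close> has to be measurable, not \<open>P\<close>: measurability of
  \<open>spanning_forest\<close> is never established.\<close>

lemma AE_distr_graph:
  assumes ae: "AE x in \<rho>. P x" and sets: "sets \<rho> = sets M" and f: "f \<in> M \<rightarrow>\<^sub>M N"
    and graph: "Measurable.pred (M \<Otimes>\<^sub>M N) (\<lambda>p. snd p = f (fst p))"
  shows "AE p in distr \<rho> (M \<Otimes>\<^sub>M N) (\<lambda>x. (x, f x)). P (fst p) \<and> snd p = f (fst p)"
proof -
  obtain Z where Z: "{x \<in> space \<rho>. \<not> P x} \<subseteq> Z" "Z \<in> null_sets \<rho>"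
    using ae by (auto elim!: AE_E simp: null_sets_def)
  have Z_sets: "Z \<in> sets M"
    using Z(2) sets by (auto simp: null_sets_def)
  have space: "space \<rho> = space M"
    using sets by (rule sets_eq_imp_space_eq)
  let ?Q = "\<lambda>p. fst p \<notin> Z \<and> snd p = f (fst p)"
  have "Measurable.pred (M \<Otimes>\<^sub>M N) ?Q"
    using pred_sets2[OF Z_sets measurable_fst] graph by (intro pred_intros_logic)
  moreover have "AE x in \<rho>. ?Q (x, f x)"
    using AE_not_in[OF Z(2)] by simp
  ultimately have "AE p in distr \<rho> (M \<Otimes>\<^sub>M N) (\<lambda>x. (x, f x)). ?Q p"
    using AE_distr_iff[OF measurable_graph[OF sets f], of ?Q] by (simp add: pred_def)
  moreover have "AE p in distr \<rho> (M \<Otimes>\<^sub>M N) (\<lambda>x. (x, f x)). fst p \<in> space M"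
    using AE_space by (rule eventually_mono) (auto simp: space_pair_measure)
  ultimately show ?thesis
    by eventually_elim (use Z(1) space in blast)
qed

lemma measurable_component_Mcfg [measurable]: "Measurable.pred Mcfg (\<lambda>G. G e)"
  unfolding Mcfg_def by measurable

lemma measurable_cycle_maximal [measurable]: "Measurable.pred Mcfg (\<lambda>G. cycle_maximal G e)"
  unfolding cycle_maximal_def is_cycle_iff_edges subset_iff mem_Collect_eq by measurable

lemma measurable_free_msf: "free_msf \<in> Mcfg \<rightarrow>\<^sub>M Mcfg"
proof -
  have "(\<lambda>G. free_msf G e) \<in> Mcfg \<rightarrow>\<^sub>M count_space UNIV" for e
    unfolding free_msf_def by measurable
  then show ?thesis
    unfolding Mcfg_def by (intro measurable_PiM_single') (simp_all add: space_PiM)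
qed

lemma measurable_shift_cfg: "shift_cfg a \<in> Pi\<^sub>M UNIV (\<lambda>_. N) \<rightarrow>\<^sub>M Pi\<^sub>M UNIV (\<lambda>_. N)"
  unfolding shift_cfg_def by (rule measurable_PiM_single') (auto simp: space_PiM)

lemma pred_eq_Mcfg:
  assumes "f \<in> M \<rightarrow>\<^sub>M Mcfg" "g \<in> M \<rightarrow>\<^sub>M Mcfg"
  shows "Measurable.pred M (\<lambda>x. f x = g x)"
proof -
  have "(\<lambda>x. h x e) \<in> M \<rightarrow>\<^sub>M count_space UNIV" if "h \<in> M \<rightarrow>\<^sub>M Mcfg" for h e
    using measurable_compose[OF that measurable_component_Mcfg[of e]] by simp
  then have "Measurable.pred M (\<lambda>x. \<forall>e. f x e = g x e)"
    using assms by (intro pred_intros_countable pred_intros_logic(6))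
  then show ?thesis
    by (simp add: fun_eq_iff)
qed

lemma measurable_shift_cfg_Mcfg: "shift_cfg a \<in> Mcfg \<rightarrow>\<^sub>M Mcfg"
  unfolding Mcfg_def by (rule measurable_shift_cfg)

lemma measurable_shift_cfg_Mw: "shift_cfg a \<in> Mw \<rightarrow>\<^sub>M Mw"
  unfolding Mw_def by (rule measurable_shift_cfg)

lemma invariant_free_msf_coupling:
  fixes \<rho> M :: "'x measure" and T :: "vtx \<Rightarrow> 'x \<Rightarrow> 'x" and \<pi> :: "'x \<Rightarrow> edge \<Rightarrow> bool"
  assumes prob: "prob_space \<rho>" and sets: "sets \<rho> = sets M" and \<pi>: "\<pi> \<in> M \<rightarrow>\<^sub>M Mcfg"
    and T: "\<And>a. T a \<in> M \<rightarrow>\<^sub>M M" and inv: "\<And>a. distr \<rho> M (T a) = \<rho>"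
    and equivariant: "\<And>a x. \<pi> (T a x) = shift_cfg a (\<pi> x)"
    and fin: "AE x in \<rho>. finitely_many_cycles (\<pi> x)"
  shows "\<exists>\<mu>. prob_space \<mu> \<and> sets \<mu> = sets (M \<Otimes>\<^sub>M Mcfg) \<and> distr \<mu> M fst = \<rho> \<and>
    (\<forall>a. distr \<mu> (M \<Otimes>\<^sub>M Mcfg) (\<lambda>(x, F). (T a x, shift_cfg a F)) = \<mu>) \<and>
    (AE p in \<mu>. spanning_forest (\<pi> (fst p)) (snd p))"
proof -
  let ?f = "\<lambda>x. free_msf (\<pi> x)"
  have f: "?f \<in> M \<rightarrow>\<^sub>M Mcfg"
    using measurable_compose[OF \<pi> measurable_free_msf] .
  define \<mu> where "\<mu> = distr \<rho> (M \<Otimes>\<^sub>M Mcfg) (\<lambda>x. (x, ?f x))"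
  have "prob_space \<mu>"
    unfolding \<mu>_def by (rule prob_space.prob_space_distr[OF prob measurable_graph[OF sets f]])
  moreover have "sets \<mu> = sets (M \<Otimes>\<^sub>M Mcfg)"
    by (simp add: \<mu>_def)
  moreover have "distr \<mu> M fst = \<rho>"
    unfolding \<mu>_def using sets f by (rule distr_graph_fst)
  moreover have "distr \<mu> (M \<Otimes>\<^sub>M Mcfg) (\<lambda>(x, F). (T a x, shift_cfg a F)) = \<mu>" for a
    unfolding \<mu>_def using sets f T measurable_shift_cfg_Mcfg inv
    by (rule distr_graph_invariant) (simp add: equivariant free_msf_shift)
  moreover have "AE p in \<mu>. spanning_forest (\<pi> (fst p)) (snd p)"
  proof -
    have "Measurable.pred (M \<Otimes>\<^sub>M Mcfg) (\<lambda>p. snd p = ?f (fst p))"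
      by (intro pred_eq_Mcfg measurable_snd measurable_compose[OF measurable_fst f])
    from AE_distr_graph[OF fin sets f this] show ?thesis
      unfolding \<mu>_def by eventually_elim (simp add: spanning_forest_free_msf)
  qed
  ultimately show ?thesis
    by blast
qed

lemma measurable_shift_cfg_pair:
  "(\<lambda>(G, w). (shift_cfg a G, shift_cfg a w)) \<in> Mcfg \<Otimes>\<^sub>M Mw \<rightarrow>\<^sub>M Mcfg \<Otimes>\<^sub>M Mw"
  unfolding split_beta'
  by (intro measurable_Pair measurable_compose[OF measurable_fst measurable_shift_cfg_Mcfg]
      measurable_compose[OF measurable_snd measurable_shift_cfg_Mw])

lemma shift_cfg_triple_eq:
  "(\<lambda>((G, w), F). ((shift_cfg a G, shift_cfg a w), shift_cfg a F))
    = (\<lambda>(x, F). ((\<lambda>(G, w). (shift_cfg a G, shift_cfg a w)) x, shift_cfg a F))"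
  by (simp add: fun_eq_iff split_beta)

theorem lemma2p7:
  shows "(\<forall>\<rho> :: (edge \<Rightarrow> bool) measure.
      prob_space \<rho> \<and> sets \<rho> = sets Mcfg \<and>
      (\<forall>a. distr \<rho> Mcfg (shift_cfg a) = \<rho>) \<and>
      (AE G in \<rho>. finitely_many_cycles G)
    \<longrightarrow> (\<exists>\<mu> :: ((edge \<Rightarrow> bool) \<times> (edge \<Rightarrow> bool)) measure.
      prob_space \<mu> \<and> sets \<mu> = sets (Mcfg \<Otimes>\<^sub>M Mcfg) \<and>
      distr \<mu> Mcfg fst = \<rho> \<and>
      (\<forall>a. distr \<mu> (Mcfg \<Otimes>\<^sub>M Mcfg) (\<lambda>(G, F). (shift_cfg a G, shift_cfg a F)) = \<mu>) \<and>
      (AE p in \<mu>. spanning_forest (fst p) (snd p))))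
   \<and>
   (\<forall>\<rho> :: ((edge \<Rightarrow> bool) \<times> (edge \<Rightarrow> real)) measure.
      prob_space \<rho> \<and> sets \<rho> = sets (Mcfg \<Otimes>\<^sub>M Mw) \<and>
      (\<forall>a. distr \<rho> (Mcfg \<Otimes>\<^sub>M Mw) (\<lambda>(G, w). (shift_cfg a G, shift_cfg a w)) = \<rho>) \<and>
      (AE q in \<rho>. finitely_many_cycles (fst q))
    \<longrightarrow> (\<exists>\<mu> :: (((edge \<Rightarrow> bool) \<times> (edge \<Rightarrow> real)) \<times> (edge \<Rightarrow> bool)) measure.
      prob_space \<mu> \<and> sets \<mu> = sets ((Mcfg \<Otimes>\<^sub>M Mw) \<Otimes>\<^sub>M Mcfg) \<and>
      distr \<mu> (Mcfg \<Otimes>\<^sub>M Mw) fst = \<rho> \<and>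
      (\<forall>a. distr \<mu> ((Mcfg \<Otimes>\<^sub>M Mw) \<Otimes>\<^sub>M Mcfg)
             (\<lambda>((G, w), F). ((shift_cfg a G, shift_cfg a w), shift_cfg a F)) = \<mu>) \<and>
      (AE p in \<mu>. spanning_forest (fst (fst p)) (snd p))))"
  apply (intro conjI allI impI)
  subgoal
    by (intro invariant_free_msf_coupling[where \<pi> = "\<lambda>G. G"])
      (auto simp: measurable_shift_cfg_Mcfg measurable_ident_sets)
  subgoal
    unfolding shift_cfg_triple_eq
    by (intro invariant_free_msf_coupling[where \<pi> = fst])
      (auto simp: measurable_shift_cfg_pair split: prod.splits)
  done

end
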